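(* Let $G$ be a profinite group such that $H^*(G)$ is $2$-quadratic. Then the kernel of the inflation map $\inf_G\colon H^2(G^{[2]})_{\mathrm{dec}}\to H^2(G)$ is generated by those elements of the form $\psi\cup\psi'$ with $\psi,\psi'\in H^1(G^{[2]})$ which lie in this kernel.
   Context: $p$ is a prime, $q=p^s$ ($s\ge1$); $H^i(G)=H^i(G,\mathbb{Z}/q)$ is continuous cohomology with trivial action, with cup product. $G^{(2)}=G^q[G,G]$ and $G^{[2]}=G/G^{(2)}$. $H^2(G)_{\mathrm{dec}}$ is the image of the cup product $H^1(G)\otimes H^1(G)\to H^2(G)$. $H^*(G)$ is called $2$-quadratic if the kernel of the cup product map $H^1(G)\otimes_{\mathbb{Z}/q}H^1(G)\to H^2(G)$ equals the subgroup $C_2$ generated by all $\psi_1\otimes\psi_2$ with $\psi_1\cup\psi_2=0$ (i.e., the induced map $H^1(G)^{\otimes 2}/C_2\to H^2(G)_{\mathrm{dec}}$ is an isomorphism). *)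

theory Defs
  imports "HOL-Analysis.Analysis" "HOL-Algebra.Coset" "HOL-Algebra.Generated_Groups"
    "HOL-Algebra.FiniteProduct"
begin

definition topological_group :: "('a, 'b) monoid_scheme \<Rightarrow> 'a topology \<Rightarrow> bool" where
  "topological_group G T \<longleftrightarrow> group G \<and> topspace T = carrier G
     \<and> continuous_map (prod_topology T T) T (\<lambda>(x, y). x \<otimes>\<^bsub>G\<^esub> y)
     \<and> continuous_map T T (\<lambda>x. inv\<^bsub>G\<^esub> x)"

definition profinite_group :: "('a, 'b) monoid_scheme \<Rightarrow> 'a topology \<Rightarrow> bool" where
  "profinite_group G T \<longleftrightarrow> topological_group G T \<and> compact_space T \<and> Hausdorff_space T
     \<and> (\<forall>x\<in>topspace T. connected_component_of_set T x = {x})"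

section \<open>Coefficients Z/q (represented by 0..q-1, discrete topology)\<close>

definition Zq :: "nat \<Rightarrow> int set" where "Zq q = {0..<int q}"
definition ZqT :: "nat \<Rightarrow> int topology" where "ZqT q = discrete_topology (Zq q)"

text \<open>H^1 = continuous homomorphisms G -> Z/q (B^1 = 0 for the trivial action).\<close>
definition H1 :: "('a, 'b) monoid_scheme \<Rightarrow> 'a topology \<Rightarrow> nat \<Rightarrow> ('a \<Rightarrow> int) set" where
  "H1 G T q = {\<psi>. continuous_map T (ZqT q) \<psi> \<and> (\<forall>x. x \<notin> carrier G \<longrightarrow> \<psi> x = 0)
     \<and> (\<forall>g\<in>carrier G. \<forall>h\<in>carrier G. \<psi> (g \<otimes>\<^bsub>G\<^esub> h) = (\<psi> g + \<psi> h) mod int q)}"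

definition C1 :: "('a, 'b) monoid_scheme \<Rightarrow> 'a topology \<Rightarrow> nat \<Rightarrow> ('a \<Rightarrow> int) set" where
  "C1 G T q = {c. continuous_map T (ZqT q) c \<and> (\<forall>x. x \<notin> carrier G \<longrightarrow> c x = 0)}"

definition Z2 :: "('a, 'b) monoid_scheme \<Rightarrow> 'a topology \<Rightarrow> nat \<Rightarrow> ('a \<times> 'a \<Rightarrow> int) set" where
  "Z2 G T q = {f. continuous_map (prod_topology T T) (ZqT q) f
     \<and> (\<forall>x. x \<notin> carrier G \<times> carrier G \<longrightarrow> f x = 0)
     \<and> (\<forall>g\<in>carrier G. \<forall>h\<in>carrier G. \<forall>k\<in>carrier G.
          (f (h, k) - f (g \<otimes>\<^bsub>G\<^esub> h, k) + f (g, h \<otimes>\<^bsub>G\<^esub> k) - f (g, h)) mod int q = 0)}"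

definition cohom2 :: "('a, 'b) monoid_scheme \<Rightarrow> 'a topology \<Rightarrow> nat
    \<Rightarrow> ('a \<times> 'a \<Rightarrow> int) \<Rightarrow> ('a \<times> 'a \<Rightarrow> int) \<Rightarrow> bool" where
  "cohom2 G T q f f' \<longleftrightarrow> (\<exists>c\<in>C1 G T q. \<forall>g\<in>carrier G. \<forall>h\<in>carrier G.
     (f (g, h) - f' (g, h)) mod int q = (c h - c (g \<otimes>\<^bsub>G\<^esub> h) + c g) mod int q)"

definition cls2 :: "('a, 'b) monoid_scheme \<Rightarrow> 'a topology \<Rightarrow> nat
    \<Rightarrow> ('a \<times> 'a \<Rightarrow> int) \<Rightarrow> ('a \<times> 'a \<Rightarrow> int) set" where
  "cls2 G T q f = {f' \<in> Z2 G T q. cohom2 G T q f f'}"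

text \<open>The group H^2(G) = Z^2/B^2, elements are cohomology classes (sets of cocycles).\<close>
definition H2 :: "('a, 'b) monoid_scheme \<Rightarrow> 'a topology \<Rightarrow> nat
    \<Rightarrow> ('a \<times> 'a \<Rightarrow> int) set monoid" where
  "H2 G T q = \<lparr> carrier = cls2 G T q ` Z2 G T q,
     mult = (\<lambda>A B. cls2 G T q (\<lambda>x. ((SOME f. f \<in> A) x + (SOME f. f \<in> B) x) mod int q)),
     one = cls2 G T q (\<lambda>x. 0) \<rparr>"

definition cup :: "('a, 'b) monoid_scheme \<Rightarrow> 'a topology \<Rightarrow> nat
    \<Rightarrow> ('a \<Rightarrow> int) \<Rightarrow> ('a \<Rightarrow> int) \<Rightarrow> ('a \<times> 'a \<Rightarrow> int) set" where
  "cup G T q \<psi> \<psi>' = cls2 G T q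
     (\<lambda>(g, h). if g \<in> carrier G \<and> h \<in> carrier G then (\<psi> g * \<psi>' h) mod int q else 0)"

definition H2dec :: "('a, 'b) monoid_scheme \<Rightarrow> 'a topology \<Rightarrow> nat
    \<Rightarrow> ('a \<times> 'a \<Rightarrow> int) set monoid" where
  "H2dec G T q = (H2 G T q)\<lparr> carrier := generate (H2 G T q)
     {c. \<exists>\<psi>\<in>H1 G T q. \<exists>\<psi>'\<in>H1 G T q. c = cup G T q \<psi> \<psi>'} \<rparr>"

text \<open>The tensor product H^1 \<otimes> H^1 is realised as finitely supported formal integer
  combinations of pairs (the free abelian group on H^1 \<times> H^1) modulo the subgroup generated
  by the bilinearity relations.  (As H^1 has exponent q, this is the same as the tensor
  product over Z/q.)\<close>

inductive_set zspan :: "('x \<Rightarrow> int) set \<Rightarrow> ('x \<Rightarrow> int) set" for S where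
  zero: "(\<lambda>_. 0) \<in> zspan S"
| gen: "s \<in> S \<Longrightarrow> s \<in> zspan S"
| neg: "a \<in> zspan S \<Longrightarrow> (\<lambda>x. - a x) \<in> zspan S"
| add: "a \<in> zspan S \<Longrightarrow> b \<in> zspan S \<Longrightarrow> (\<lambda>x. a x + b x) \<in> zspan S"

definition delta :: "'x \<Rightarrow> 'x \<Rightarrow> int" where
  "delta z = (\<lambda>y. if y = z then 1 else 0)"

definition add1 :: "nat \<Rightarrow> ('a \<Rightarrow> int) \<Rightarrow> ('a \<Rightarrow> int) \<Rightarrow> ('a \<Rightarrow> int)" where
  "add1 q \<psi> \<phi> = (\<lambda>x. (\<psi> x + \<phi> x) mod int q)"

definition bilin_rels :: "('a, 'b) monoid_scheme \<Rightarrow> 'a topology \<Rightarrow> nat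
    \<Rightarrow> (('a \<Rightarrow> int) \<times> ('a \<Rightarrow> int) \<Rightarrow> int) set" where
  "bilin_rels G T q =
     {(\<lambda>z. delta (add1 q a a', b) z - delta (a, b) z - delta (a', b) z)
        | a a' b. a \<in> H1 G T q \<and> a' \<in> H1 G T q \<and> b \<in> H1 G T q}
   \<union> {(\<lambda>z. delta (a, add1 q b b') z - delta (a, b) z - delta (a, b') z)
        | a b b'. a \<in> H1 G T q \<and> b \<in> H1 G T q \<and> b' \<in> H1 G T q}"

definition C2_gens :: "('a, 'b) monoid_scheme \<Rightarrow> 'a topology \<Rightarrow> nat
    \<Rightarrow> (('a \<Rightarrow> int) \<times> ('a \<Rightarrow> int) \<Rightarrow> int) set" where
  "C2_gens G T q = {delta (a, b) | a b. a \<in> H1 G T q \<and> b \<in> H1 G T q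
      \<and> cup G T q a b = \<one>\<^bsub>H2 G T q\<^esub>}"

definition cup_formal :: "('a, 'b) monoid_scheme \<Rightarrow> 'a topology \<Rightarrow> nat
    \<Rightarrow> (('a \<Rightarrow> int) \<times> ('a \<Rightarrow> int) \<Rightarrow> int) \<Rightarrow> ('a \<times> 'a \<Rightarrow> int) set" where
  "cup_formal G T q F = finprod (H2 G T q)
     (\<lambda>(a, b). (cup G T q a b) [^]\<^bsub>H2 G T q\<^esub> (F (a, b))) {z. F z \<noteq> 0}"

text \<open>H^*(G) is 2-quadratic: kernel of H^1 \<otimes> H^1 -> H^2 equals C_2
  (the inclusion C_2 \<subseteq> kernel being automatic).\<close>
definition two_quadratic :: "('a, 'b) monoid_scheme \<Rightarrow> 'a topology \<Rightarrow> nat \<Rightarrow> bool" where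
  "two_quadratic G T q \<longleftrightarrow>
     (\<forall>F. finite {z. F z \<noteq> 0} \<and> {z. F z \<noteq> 0} \<subseteq> H1 G T q \<times> H1 G T q
        \<and> cup_formal G T q F = \<one>\<^bsub>H2 G T q\<^esub>
        \<longrightarrow> F \<in> zspan (bilin_rels G T q \<union> C2_gens G T q))"

definition Gsub2 :: "('a, 'b) monoid_scheme \<Rightarrow> 'a topology \<Rightarrow> nat \<Rightarrow> 'a set" where
  "Gsub2 G T q = T closure_of generate G
     ({x [^]\<^bsub>G\<^esub> q | x. x \<in> carrier G}
      \<union> {x \<otimes>\<^bsub>G\<^esub> y \<otimes>\<^bsub>G\<^esub> inv\<^bsub>G\<^esub> x \<otimes>\<^bsub>G\<^esub> inv\<^bsub>G\<^esub> y | x y. x \<in> carrier G \<and> y \<in> carrier G})"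

definition Gquot2 :: "('a, 'b) monoid_scheme \<Rightarrow> 'a topology \<Rightarrow> nat \<Rightarrow> 'a set monoid" where
  "Gquot2 G T q = G Mod (Gsub2 G T q)"

definition Tquot2 :: "('a, 'b) monoid_scheme \<Rightarrow> 'a topology \<Rightarrow> nat \<Rightarrow> 'a set topology" where
  "Tquot2 G T q = topology (\<lambda>U. U \<subseteq> carrier (Gquot2 G T q) \<and> openin T (\<Union>U))"

definition infl2 :: "('a, 'b) monoid_scheme \<Rightarrow> 'a topology \<Rightarrow> nat
    \<Rightarrow> ('a set \<times> 'a set \<Rightarrow> int) set \<Rightarrow> ('a \<times> 'a \<Rightarrow> int) set" where
  "infl2 G T q A = cls2 G T q (\<lambda>(g, h). if g \<in> carrier G \<and> h \<in> carrier G
      then (SOME f. f \<in> A) (Gsub2 G T q #>\<^bsub>G\<^esub> g, Gsub2 G T q #>\<^bsub>G\<^esub> h) else 0)"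

end

theory Submission
  imports Defs
begin

text \<open>A continuous character G \<rightarrow> Z/q kills q-th powers and commutators, and its kernel is
  closed because Z/q is discrete; so it vanishes on G^(2), and inflation is a bijection
  H^1(G^[2]) \<cong> H^1(G) compatible with cup products. Consequently every decomposable class x in
  H^2(G^[2]) is the cup-product image of a tensor F in H^1(G) \<otimes> H^1(G), and inf(x) is the
  cup product of F computed in H^2(G). If inf(x) = 0, 2-quadraticity writes F as a combination of
  bilinearity relations, which map to 0 by bilinearity of the cup product on G^[2], and of pure
  tensors \<psi> \<otimes> \<psi>' with \<psi> \<cup> \<psi>' = 0, which map to cup products on G^[2] killed by inflation.\<close>

lemma mod_in_Zq: "q > 0 \<Longrightarrow> a mod int q \<in> Zq q"
  by (simp add: Zq_def)

lemma continuous_map_ZqT_iff: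
  "continuous_map X (ZqT q) f \<longleftrightarrow>
     (\<forall>x\<in>topspace X. f x \<in> Zq q) \<and> (\<forall>y. openin X {x\<in>topspace X. f x = y})"
proof
  assume f: "continuous_map X (ZqT q) f"
  then have vals: "\<forall>x\<in>topspace X. f x \<in> Zq q"
    by (auto simp: continuous_map ZqT_def)
  have "openin X {x\<in>topspace X. f x = y}" for y
  proof (cases "y \<in> Zq q")
    case True
    then have "openin X {x\<in>topspace X. f x \<in> {y}}"
      using f by (auto simp: continuous_map ZqT_def)
    then show ?thesis by simp
  next
    case False
    then have "{x\<in>topspace X. f x = y} = {}" using vals by auto
    then show ?thesis by (simp only: openin_empty)
  qed
  with vals show "(\<forall>x\<in>topspace X. f x \<in> Zq q) \<and> (\<forall>y. openin X {x\<in>topspace X. f x = y})"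
    by blast
next
  assume f: "(\<forall>x\<in>topspace X. f x \<in> Zq q) \<and> (\<forall>y. openin X {x\<in>topspace X. f x = y})"
  show "continuous_map X (ZqT q) f"
    unfolding continuous_map
  proof (intro conjI allI impI)
    show "f ` topspace X \<subseteq> topspace (ZqT q)" using f by (auto simp: ZqT_def)
    fix U
    have "{x \<in> topspace X. f x \<in> U} = (\<Union>y\<in>U. {x\<in>topspace X. f x = y})" by auto
    also have "openin X \<dots>" using f by auto
    finally show "openin X {x \<in> topspace X. f x \<in> U}" .
  qed
qed

lemma continuous_map_ZqT_combine:
  fixes \<phi> :: "int \<Rightarrow> int \<Rightarrow> int"
  assumes f: "continuous_map X (ZqT q) f" and g: "continuous_map X (ZqT q) g"
    and h_vals: "\<And>x. x \<in> topspace X \<Longrightarrow> h x \<in> Zq q"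
    and h_eq: "\<And>x. x \<in> topspace X \<Longrightarrow> h x = \<phi> (f x) (g x)"
  shows "continuous_map X (ZqT q) h"
  unfolding continuous_map_ZqT_iff
proof (intro conjI ballI allI)
  fix y
  have "{x\<in>topspace X. h x = y} =
        (\<Union>(a, b)\<in>{(a, b). \<phi> a b = y}. {x\<in>topspace X. f x = a} \<inter> {x\<in>topspace X. g x = b})"
    using h_eq by auto
  also have "openin X \<dots>"
    using f g unfolding continuous_map_ZqT_iff by (intro openin_Union) auto
  finally show "openin X {x\<in>topspace X. h x = y}" .
qed (use h_vals in auto)

lemma continuous_map_ZqT_zero: "q > 0 \<Longrightarrow> continuous_map X (ZqT q) (\<lambda>x. 0)"
  by (rule continuous_map_const[THEN iffD2]) (simp add: ZqT_def Zq_def)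

section \<open>Cochains and the group H^2\<close>

definition neg1 :: "nat \<Rightarrow> ('a \<Rightarrow> int) \<Rightarrow> ('a \<Rightarrow> int)" where
  "neg1 q f = (\<lambda>x. (- f x) mod int q)"

lemma dvd_mod_diff_self: "(k::int) dvd (a mod k - a)"
  by (metis mod_eq_dvd_iff mod_mod_trivial)

lemma dvd_add1: "int q dvd (add1 q f g x - f x - g x)"
  using dvd_mod_diff_self[of "int q" "f x + g x"] by (simp add: add1_def diff_diff_eq)

lemma dvd_neg1: "int q dvd (neg1 q f x + f x)"
  using dvd_mod_diff_self[of "int q" "- f x"] by (simp add: neg1_def)

lemma C1_zero: "q > 0 \<Longrightarrow> (\<lambda>_. 0) \<in> C1 G T q"
  by (simp add: C1_def continuous_map_ZqT_zero del: continuous_map_const)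

lemma C1_add1: "q > 0 \<Longrightarrow> c \<in> C1 G T q \<Longrightarrow> d \<in> C1 G T q \<Longrightarrow> add1 q c d \<in> C1 G T q"
  unfolding C1_def add1_def
  by (auto intro!: continuous_map_ZqT_combine[of T q c d _ "\<lambda>a b. (a + b) mod int q"] mod_in_Zq)

lemma C1_neg1: "q > 0 \<Longrightarrow> c \<in> C1 G T q \<Longrightarrow> neg1 q c \<in> C1 G T q"
  unfolding C1_def neg1_def
  by (auto intro!: continuous_map_ZqT_combine[of T q c c _ "\<lambda>a b. (- a) mod int q"] mod_in_Zq)

lemma cohom2_iff:
  "cohom2 G T q f f' \<longleftrightarrow> (\<exists>c\<in>C1 G T q. \<forall>g\<in>carrier G. \<forall>h\<in>carrier G.
     int q dvd (f (g, h) - f' (g, h) - (c h - c (g \<otimes>\<^bsub>G\<^esub> h) + c g)))"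
  unfolding cohom2_def mod_eq_dvd_iff by simp

lemma cohom2_if_congruent:
  assumes "q > 0" and "\<And>g h. g \<in> carrier G \<Longrightarrow> h \<in> carrier G \<Longrightarrow> int q dvd (f (g, h) - f' (g, h))"
  shows "cohom2 G T q f f'"
  unfolding cohom2_iff using assms by (intro bexI[OF _ C1_zero]) auto

lemma cohom2_refl: "q > 0 \<Longrightarrow> cohom2 G T q f f"
  by (rule cohom2_if_congruent) auto

lemma cohom2_sym:
  assumes q: "q > 0" and "cohom2 G T q f f'" shows "cohom2 G T q f' f"
proof -
  from assms(2) obtain c where c: "c \<in> C1 G T q" and cob: "\<And>g h. g \<in> carrier G \<Longrightarrow> h \<in> carrier G
      \<Longrightarrow> int q dvd (f (g, h) - f' (g, h) - (c h - c (g \<otimes>\<^bsub>G\<^esub> h) + c g))"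
    unfolding cohom2_iff by blast
  show ?thesis unfolding cohom2_iff
  proof (intro bexI[OF _ C1_neg1[OF q c]] ballI)
    fix g h assume gh: "g \<in> carrier G" "h \<in> carrier G"
    show "int q dvd f' (g, h) - f (g, h)
        - (neg1 q c h - neg1 q c (g \<otimes>\<^bsub>G\<^esub> h) + neg1 q c g)"
      using cob[OF gh] dvd_neg1[of q c h] dvd_neg1[of q c "g \<otimes>\<^bsub>G\<^esub> h"] dvd_neg1[of q c g]
      by algebra
  qed
qed

lemma cohom2_trans:
  assumes q: "q > 0" and "cohom2 G T q f f'" "cohom2 G T q f' f''" shows "cohom2 G T q f f''"
proof -
  from assms(2) obtain c where c: "c \<in> C1 G T q" and cob: "\<And>g h. g \<in> carrier G \<Longrightarrow> h \<in> carrier G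
      \<Longrightarrow> int q dvd (f (g, h) - f' (g, h) - (c h - c (g \<otimes>\<^bsub>G\<^esub> h) + c g))"
    unfolding cohom2_iff by blast
  from assms(3) obtain d where d: "d \<in> C1 G T q" and cob': "\<And>g h. g \<in> carrier G \<Longrightarrow> h \<in> carrier G
      \<Longrightarrow> int q dvd (f' (g, h) - f'' (g, h) - (d h - d (g \<otimes>\<^bsub>G\<^esub> h) + d g))"
    unfolding cohom2_iff by blast
  show ?thesis unfolding cohom2_iff
  proof (intro bexI[OF _ C1_add1[OF q c d]] ballI)
    fix g h assume gh: "g \<in> carrier G" "h \<in> carrier G"
    show "int q dvd f (g, h) - f'' (g, h)
        - (add1 q c d h - add1 q c d (g \<otimes>\<^bsub>G\<^esub> h) + add1 q c d g)"
      using cob[OF gh] cob'[OF gh] dvd_add1[of q c d h] dvd_add1[of q c d "g \<otimes>\<^bsub>G\<^esub> h"]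
        dvd_add1[of q c d g]
      by algebra
  qed
qed

lemma cohom2_add1:
  assumes q: "q > 0" and "cohom2 G T q f f'" "cohom2 G T q k k'"
  shows "cohom2 G T q (add1 q f k) (add1 q f' k')"
proof -
  from assms(2) obtain c where c: "c \<in> C1 G T q" and cob: "\<And>g h. g \<in> carrier G \<Longrightarrow> h \<in> carrier G
      \<Longrightarrow> int q dvd (f (g, h) - f' (g, h) - (c h - c (g \<otimes>\<^bsub>G\<^esub> h) + c g))"
    unfolding cohom2_iff by blast
  from assms(3) obtain d where d: "d \<in> C1 G T q" and cob': "\<And>g h. g \<in> carrier G \<Longrightarrow> h \<in> carrier G
      \<Longrightarrow> int q dvd (k (g, h) - k' (g, h) - (d h - d (g \<otimes>\<^bsub>G\<^esub> h) + d g))"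
    unfolding cohom2_iff by blast
  show ?thesis unfolding cohom2_iff
  proof (intro bexI[OF _ C1_add1[OF q c d]] ballI)
    fix g h assume gh: "g \<in> carrier G" "h \<in> carrier G"
    show "int q dvd add1 q f k (g, h) - add1 q f' k' (g, h)
        - (add1 q c d h - add1 q c d (g \<otimes>\<^bsub>G\<^esub> h) + add1 q c d g)"
      using cob[OF gh] cob'[OF gh] dvd_add1[of q f k "(g, h)"] dvd_add1[of q f' k' "(g, h)"]
        dvd_add1[of q c d h] dvd_add1[of q c d "g \<otimes>\<^bsub>G\<^esub> h"] dvd_add1[of q c d g]
      by algebra
  qed
qed

lemma cls2_eq: "q > 0 \<Longrightarrow> cohom2 G T q f f' \<Longrightarrow> cls2 G T q f = cls2 G T q f'"
  unfolding cls2_def by (auto intro: cohom2_trans cohom2_sym)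

lemma cls2_self: "q > 0 \<Longrightarrow> f \<in> Z2 G T q \<Longrightarrow> f \<in> cls2 G T q f"
  unfolding cls2_def by (auto intro: cohom2_refl)

lemma cohom2_some_cls2:
  "q > 0 \<Longrightarrow> f \<in> Z2 G T q \<Longrightarrow> cohom2 G T q f (SOME f'. f' \<in> cls2 G T q f)"
  using someI[of "\<lambda>f'. f' \<in> cls2 G T q f", OF cls2_self] by (simp add: cls2_def)

lemma Z2_continuous: "f \<in> Z2 G T q \<Longrightarrow> continuous_map (prod_topology T T) (ZqT q) f"
  by (simp add: Z2_def)

lemma Z2_vanishes: "f \<in> Z2 G T q \<Longrightarrow> x \<notin> carrier G \<times> carrier G \<Longrightarrow> f x = 0"
  unfolding Z2_def by blast

lemma Z2_cocycle:
  "f \<in> Z2 G T q \<Longrightarrow> g \<in> carrier G \<Longrightarrow> h \<in> carrier G \<Longrightarrow> k \<in> carrier G \<Longrightarrow>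
     int q dvd (f (h, k) - f (g \<otimes>\<^bsub>G\<^esub> h, k) + f (g, h \<otimes>\<^bsub>G\<^esub> k) - f (g, h))"
  unfolding Z2_def by (auto simp: mod_eq_0_iff_dvd)

lemma Z2I:
  assumes "continuous_map (prod_topology T T) (ZqT q) f"
    and "\<And>x. x \<notin> carrier G \<times> carrier G \<Longrightarrow> f x = 0"
    and "\<And>g h k. g \<in> carrier G \<Longrightarrow> h \<in> carrier G \<Longrightarrow> k \<in> carrier G \<Longrightarrow>
      int q dvd (f (h, k) - f (g \<otimes>\<^bsub>G\<^esub> h, k) + f (g, h \<otimes>\<^bsub>G\<^esub> k) - f (g, h))"
  shows "f \<in> Z2 G T q"
  using assms unfolding Z2_def by (auto simp: mod_eq_0_iff_dvd)

lemma Z2_zero: "q > 0 \<Longrightarrow> (\<lambda>_. 0) \<in> Z2 G T q"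
  by (simp add: Z2_def continuous_map_ZqT_zero del: continuous_map_const)

lemma Z2_add1:
  assumes q: "q > 0" and f: "f \<in> Z2 G T q" and f': "f' \<in> Z2 G T q"
  shows "add1 q f f' \<in> Z2 G T q"
proof (rule Z2I)
  show "continuous_map (prod_topology T T) (ZqT q) (add1 q f f')"
    unfolding add1_def
    by (rule continuous_map_ZqT_combine[OF Z2_continuous[OF f] Z2_continuous[OF f'],
          where \<phi> = "\<lambda>a b. (a + b) mod int q"])
       (auto intro: mod_in_Zq[OF q])
  show "add1 q f f' x = 0" if "x \<notin> carrier G \<times> carrier G" for x
    using that by (simp add: add1_def Z2_vanishes[OF f] Z2_vanishes[OF f'])
  fix g h k assume ghk: "g \<in> carrier G" "h \<in> carrier G" "k \<in> carrier G"
  show "int q dvd (add1 q f f' (h, k) - add1 q f f' (g \<otimes>\<^bsub>G\<^esub> h, k)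
      + add1 q f f' (g, h \<otimes>\<^bsub>G\<^esub> k) - add1 q f f' (g, h))"
    using Z2_cocycle[OF f ghk] Z2_cocycle[OF f' ghk]
      dvd_add1[of q f f' "(h, k)"] dvd_add1[of q f f' "(g \<otimes>\<^bsub>G\<^esub> h, k)"]
      dvd_add1[of q f f' "(g, h \<otimes>\<^bsub>G\<^esub> k)"] dvd_add1[of q f f' "(g, h)"]
    by algebra
qed

lemma Z2_neg1:
  assumes q: "q > 0" and f: "f \<in> Z2 G T q"
  shows "neg1 q f \<in> Z2 G T q"
proof (rule Z2I)
  show "continuous_map (prod_topology T T) (ZqT q) (neg1 q f)"
    unfolding neg1_def
    by (rule continuous_map_ZqT_combine[OF Z2_continuous[OF f] Z2_continuous[OF f],
          where \<phi> = "\<lambda>a b. (- a) mod int q"])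
       (auto intro: mod_in_Zq[OF q])
  show "neg1 q f x = 0" if "x \<notin> carrier G \<times> carrier G" for x
    using that by (simp add: neg1_def Z2_vanishes[OF f])
  fix g h k assume ghk: "g \<in> carrier G" "h \<in> carrier G" "k \<in> carrier G"
  show "int q dvd (neg1 q f (h, k) - neg1 q f (g \<otimes>\<^bsub>G\<^esub> h, k)
      + neg1 q f (g, h \<otimes>\<^bsub>G\<^esub> k) - neg1 q f (g, h))"
    using Z2_cocycle[OF f ghk] dvd_neg1[of q f "(h, k)"] dvd_neg1[of q f "(g \<otimes>\<^bsub>G\<^esub> h, k)"]
      dvd_neg1[of q f "(g, h \<otimes>\<^bsub>G\<^esub> k)"] dvd_neg1[of q f "(g, h)"]
    by algebra
qed

lemma H2_mult_cls2:
  assumes q: "q > 0" and f: "f \<in> Z2 G T q" and f': "f' \<in> Z2 G T q"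
  shows "cls2 G T q f \<otimes>\<^bsub>H2 G T q\<^esub> cls2 G T q f' = cls2 G T q (add1 q f f')"
proof -
  have "cohom2 G T q (add1 q f f')
      (add1 q (SOME a. a \<in> cls2 G T q f) (SOME a. a \<in> cls2 G T q f'))"
    by (intro cohom2_add1 cohom2_some_cls2 q f f')
  then show ?thesis
    by (simp add: H2_def add1_def[symmetric] cls2_eq[OF q])
qed

lemma comm_group_H2:
  assumes q: "q > 0" shows "comm_group (H2 G T q)"
proof -
  have carrier: "carrier (H2 G T q) = cls2 G T q ` Z2 G T q"
    and one: "\<one>\<^bsub>H2 G T q\<^esub> = cls2 G T q (\<lambda>_. 0)"
    by (simp_all add: H2_def)
  have assoc: "add1 q (add1 q f f') f'' = add1 q f (add1 q f' f'')" for f f' f'' :: "'a \<times> 'a \<Rightarrow> int"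
    by (simp add: add1_def mod_add_left_eq mod_add_right_eq add.assoc)
  have comm: "add1 q f f' = add1 q f' f" for f f' :: "'a \<times> 'a \<Rightarrow> int"
    by (simp add: add1_def add.commute)
  have unit: "cls2 G T q (add1 q (\<lambda>_. 0) f) = cls2 G T q f" for f
    by (rule cls2_eq[OF q], rule cohom2_if_congruent[OF q])
       (simp add: add1_def mod_eq_dvd_iff[symmetric])
  have inverse: "cls2 G T q (add1 q (neg1 q f) f) = cls2 G T q (\<lambda>_. 0)" for f
    by (rule cls2_eq[OF q], rule cohom2_if_congruent[OF q])
       (simp add: add1_def neg1_def mod_simps)
  show ?thesis
  proof (rule comm_groupI)
    fix x y z assume "x \<in> carrier (H2 G T q)" "y \<in> carrier (H2 G T q)" "z \<in> carrier (H2 G T q)"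
    then obtain f f' f'' where "f \<in> Z2 G T q" "f' \<in> Z2 G T q" "f'' \<in> Z2 G T q"
      and "x = cls2 G T q f" "y = cls2 G T q f'" "z = cls2 G T q f''"
      by (auto simp: carrier)
    then show "x \<otimes>\<^bsub>H2 G T q\<^esub> y \<in> carrier (H2 G T q)"
      and "x \<otimes>\<^bsub>H2 G T q\<^esub> y \<otimes>\<^bsub>H2 G T q\<^esub> z = x \<otimes>\<^bsub>H2 G T q\<^esub> (y \<otimes>\<^bsub>H2 G T q\<^esub> z)"
      by (simp_all add: H2_mult_cls2 Z2_add1 carrier q assoc)
    show "x \<otimes>\<^bsub>H2 G T q\<^esub> y = y \<otimes>\<^bsub>H2 G T q\<^esub> x"
      using \<open>x = cls2 G T q f\<close> \<open>y = cls2 G T q f'\<close> \<open>f \<in> Z2 G T q\<close> \<open>f' \<in> Z2 G T q\<close>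
      by (simp add: H2_mult_cls2 q comm[of f])
  next
    fix x assume "x \<in> carrier (H2 G T q)"
    then obtain f where f: "f \<in> Z2 G T q" "x = cls2 G T q f" by (auto simp: carrier)
    then show "\<one>\<^bsub>H2 G T q\<^esub> \<otimes>\<^bsub>H2 G T q\<^esub> x = x"
      by (simp add: one H2_mult_cls2 Z2_zero q unit)
    have "cls2 G T q (neg1 q f) \<otimes>\<^bsub>H2 G T q\<^esub> x = \<one>\<^bsub>H2 G T q\<^esub>"
      using f by (simp add: one H2_mult_cls2 Z2_neg1 q inverse)
    then show "\<exists>y\<in>carrier (H2 G T q). y \<otimes>\<^bsub>H2 G T q\<^esub> x = \<one>\<^bsub>H2 G T q\<^esub>"
      using Z2_neg1[OF q f(1)] by (auto simp: carrier)
  qed (simp add: one carrier Z2_zero q)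
qed

section \<open>The closed normal subgroup G^(2)\<close>

lemma topological_group_group: "topological_group G T \<Longrightarrow> group G"
  by (simp add: topological_group_def)

lemma topological_group_topspace: "topological_group G T \<Longrightarrow> topspace T = carrier G"
  by (simp add: topological_group_def)

lemma continuous_map_conjugation:
  assumes TG: "topological_group G T" and x: "x \<in> carrier G"
  shows "continuous_map T T (\<lambda>y. x \<otimes>\<^bsub>G\<^esub> y \<otimes>\<^bsub>G\<^esub> inv\<^bsub>G\<^esub> x)"
proof -
  have mult: "continuous_map (prod_topology T T) T (\<lambda>(x, y). x \<otimes>\<^bsub>G\<^esub> y)"
    and inv: "inv\<^bsub>G\<^esub> x \<in> topspace T" and x': "x \<in> topspace T"
    using TG x by (auto simp: topological_group_def intro: group.inv_closed)
  have "continuous_map T T (\<lambda>y. x \<otimes>\<^bsub>G\<^esub> y)"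
    using continuous_map_compose[OF continuous_map_pairedI[OF continuous_map_const[THEN iffD2]
        continuous_map_id] mult] x' by (simp add: o_def)
  then have "continuous_map T (prod_topology T T) (\<lambda>y. (x \<otimes>\<^bsub>G\<^esub> y, inv\<^bsub>G\<^esub> x))"
    using inv by (intro continuous_map_pairedI) auto
  from continuous_map_compose[OF this mult] show ?thesis by (simp add: o_def)
qed

lemma normal_closure_of:
  assumes TG: "topological_group G T" and K: "K \<lhd> G"
  shows "T closure_of K \<lhd> G"
proof -
  interpret grp: group G by (rule topological_group_group[OF TG])
  have K_sg: "subgroup K G" using K by (rule normal_imp_subgroup)
  have closure_image: "f ` (X closure_of S) \<subseteq> T closure_of K"
    if "continuous_map X T f" "f ` S \<subseteq> K" for X f and S :: "'c set"
    using continuous_map_image_closure_subset[OF that(1)] closure_of_mono[OF that(2)] by blast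
  have sg: "subgroup (T closure_of K) G"
  proof (rule grp.subgroupI)
    show "T closure_of K \<subseteq> carrier G"
      using closure_of_subset_topspace TG by (metis topological_group_topspace)
    have "K \<subseteq> T closure_of K"
      using TG subgroup.subset[OF K_sg] by (intro closure_of_subset) (simp add: topological_group_topspace)
    then show "T closure_of K \<noteq> {}" using subgroup.one_closed[OF K_sg] by blast
  next
    fix a assume "a \<in> T closure_of K"
    moreover have "(\<lambda>x. inv\<^bsub>G\<^esub> x) ` (T closure_of K) \<subseteq> T closure_of K"
      using TG by (intro closure_image) (auto simp: topological_group_def intro: subgroup.m_inv_closed[OF K_sg])
    ultimately show "inv\<^bsub>G\<^esub> a \<in> T closure_of K" by blast
  next
    fix a b assume "a \<in> T closure_of K" "b \<in> T closure_of K"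
    moreover have "(\<lambda>(x, y). x \<otimes>\<^bsub>G\<^esub> y) ` (prod_topology T T closure_of (K \<times> K)) \<subseteq> T closure_of K"
      using TG by (intro closure_image) (auto simp: topological_group_def intro: subgroup.m_closed[OF K_sg])
    ultimately show "a \<otimes>\<^bsub>G\<^esub> b \<in> T closure_of K" by (auto simp: closure_of_Times)
  qed
  show ?thesis
  proof (rule grp.normal_invI[OF sg])
    fix x h assume x: "x \<in> carrier G" and "h \<in> T closure_of K"
    moreover have "(\<lambda>y. x \<otimes>\<^bsub>G\<^esub> y \<otimes>\<^bsub>G\<^esub> inv\<^bsub>G\<^esub> x) ` (T closure_of K) \<subseteq> T closure_of K"
      using grp.normal_invE(2)[OF K x] by (intro closure_image continuous_map_conjugation[OF TG x]) auto
    ultimately show "x \<otimes>\<^bsub>G\<^esub> h \<otimes>\<^bsub>G\<^esub> inv\<^bsub>G\<^esub> x \<in> T closure_of K" by blast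
  qed
qed

lemma (in group) conjugation_hom:
  assumes g: "g \<in> carrier G" shows "(\<lambda>x. g \<otimes> x \<otimes> inv g) \<in> hom G G"
proof (rule homI)
  fix x y assume "x \<in> carrier G" "y \<in> carrier G"
  moreover have "inv g \<otimes> (g \<otimes> w) = w" if "w \<in> carrier G" for w
    using g that by (simp add: m_assoc[symmetric])
  ultimately show "g \<otimes> (x \<otimes> y) \<otimes> inv g = g \<otimes> x \<otimes> inv g \<otimes> (g \<otimes> y \<otimes> inv g)"
    using g by (simp add: m_assoc)
qed (use g in simp)

lemma (in group) normal_generate_powers_commutators:
  "generate G ({x [^] (n::nat) | x. x \<in> carrier G} \<union> {x \<otimes> y \<otimes> inv x \<otimes> inv y | x y. x \<in> carrier G \<and> y \<in> carrier G})
     \<lhd> G" (is "generate G ?S \<lhd> G")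
proof (rule normal_generateI)
  show "?S \<subseteq> carrier G" by auto
  fix h g assume h: "h \<in> ?S" and g: "g \<in> carrier G"
  interpret conj: group_hom G G "\<lambda>x. g \<otimes> x \<otimes> inv g"
    by (simp add: group_hom_def group_hom_axioms_def conjugation_hom[OF g] is_group)
  from h show "g \<otimes> h \<otimes> inv g \<in> ?S"
  proof (elim UnE CollectE exE conjE)
    fix x assume "h = x [^] n" "x \<in> carrier G"
    then show ?thesis using g conj.hom_nat_pow[of x n] by auto
  next
    fix x y assume "h = x \<otimes> y \<otimes> inv x \<otimes> inv y" and x: "x \<in> carrier G" and y: "y \<in> carrier G"
    then have "g \<otimes> h \<otimes> inv g = (g \<otimes> x \<otimes> inv g) \<otimes> (g \<otimes> y \<otimes> inv g)
        \<otimes> inv (g \<otimes> x \<otimes> inv g) \<otimes> inv (g \<otimes> y \<otimes> inv g)"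
      by (simp only: conj.hom_mult conj.hom_inv m_closed inv_closed)
    then show ?thesis using g x y by blast
  qed
qed

lemma normal_Gsub2: "topological_group G T \<Longrightarrow> Gsub2 G T q \<lhd> G"
  unfolding Gsub2_def
  by (intro normal_closure_of group.normal_generate_powers_commutators topological_group_group)

section \<open>The quotient G^[2] and its characters\<close>

lemma H1_continuous: "\<psi> \<in> H1 G T q \<Longrightarrow> continuous_map T (ZqT q) \<psi>"
  by (simp add: H1_def)

lemma H1_vanishes: "\<psi> \<in> H1 G T q \<Longrightarrow> x \<notin> carrier G \<Longrightarrow> \<psi> x = 0"
  by (simp add: H1_def)

lemma H1_hom:
  "\<psi> \<in> H1 G T q \<Longrightarrow> g \<in> carrier G \<Longrightarrow> h \<in> carrier G \<Longrightarrow> \<psi> (g \<otimes>\<^bsub>G\<^esub> h) = (\<psi> g + \<psi> h) mod int q"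
  by (simp add: H1_def)

lemma H1I:
  "continuous_map T (ZqT q) \<psi> \<Longrightarrow> (\<And>x. x \<notin> carrier G \<Longrightarrow> \<psi> x = 0) \<Longrightarrow>
   (\<And>g h. g \<in> carrier G \<Longrightarrow> h \<in> carrier G \<Longrightarrow> \<psi> (g \<otimes>\<^bsub>G\<^esub> h) = (\<psi> g + \<psi> h) mod int q)
   \<Longrightarrow> \<psi> \<in> H1 G T q"
  by (simp add: H1_def)

lemma H1_add1:
  assumes q: "q > 0" and \<psi>: "\<psi> \<in> H1 G T q" and \<psi>': "\<psi>' \<in> H1 G T q"
  shows "add1 q \<psi> \<psi>' \<in> H1 G T q"
proof (rule H1I)
  show "continuous_map T (ZqT q) (add1 q \<psi> \<psi>')"
    unfolding add1_def
    by (rule continuous_map_ZqT_combine[OF H1_continuous[OF \<psi>] H1_continuous[OF \<psi>'],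
          where \<phi> = "\<lambda>a b. (a + b) mod int q"])
       (auto intro: mod_in_Zq[OF q])
  show "add1 q \<psi> \<psi>' x = 0" if "x \<notin> carrier G" for x
    using that by (simp add: add1_def H1_vanishes[OF \<psi>] H1_vanishes[OF \<psi>'])
  fix g h assume "g \<in> carrier G" "h \<in> carrier G"
  then have "add1 q \<psi> \<psi>' (g \<otimes>\<^bsub>G\<^esub> h) = ((\<psi> g + \<psi> h) + (\<psi>' g + \<psi>' h)) mod int q"
    by (simp add: add1_def H1_hom[OF \<psi>] H1_hom[OF \<psi>'] mod_add_eq)
  also have "\<dots> = (add1 q \<psi> \<psi>' g + add1 q \<psi> \<psi>' h) mod int q"
    by (simp add: add1_def mod_add_eq ac_simps)
  finally show "add1 q \<psi> \<psi>' (g \<otimes>\<^bsub>G\<^esub> h) = (add1 q \<psi> \<psi>' g + add1 q \<psi> \<psi>' h) mod int q" .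
qed

definition infl1 :: "('a, 'b) monoid_scheme \<Rightarrow> 'a topology \<Rightarrow> nat \<Rightarrow> ('a set \<Rightarrow> int) \<Rightarrow> ('a \<Rightarrow> int)" where
  "infl1 G T q \<psi> = (\<lambda>g. if g \<in> carrier G then \<psi> (Gsub2 G T q #>\<^bsub>G\<^esub> g) else 0)"

text \<open>The inverse of inflation: a character of G is constant on the cosets of G^(2).\<close>
definition factor1 :: "('a, 'b) monoid_scheme \<Rightarrow> 'a topology \<Rightarrow> nat \<Rightarrow> ('a \<Rightarrow> int) \<Rightarrow> ('a set \<Rightarrow> int)" where
  "factor1 G T q \<psi> = (\<lambda>C. if C \<in> carrier (Gquot2 G T q) then \<psi> (SOME g. g \<in> C) else 0)"

locale Zq_topological_group =
  fixes G :: "('a, 'b) monoid_scheme" and T :: "'a topology" and q :: nat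
  assumes topological_group: "topological_group G T" and q_pos: "q > 0"
begin

abbreviation N where "N \<equiv> Gsub2 G T q"
abbreviation Q where "Q \<equiv> Gquot2 G T q"
abbreviation TQ where "TQ \<equiv> Tquot2 G T q"

sublocale grp: group G
  by (rule topological_group_group[OF topological_group])

sublocale nrm: normal N G
  by (rule normal_Gsub2[OF topological_group])

lemma topspace_eq: "topspace T = carrier G"
  by (rule topological_group_topspace[OF topological_group])

lemma carrier_Gquot2: "carrier Q = rcosets\<^bsub>G\<^esub> N"
  by (simp add: Gquot2_def FactGroup_def)

lemma group_Gquot2: "group Q"
  by (simp add: Gquot2_def nrm.factorgroup_is_group)

lemma coset_in_Gquot2: "g \<in> carrier G \<Longrightarrow> N #>\<^bsub>G\<^esub> g \<in> carrier Q"
  by (simp add: carrier_Gquot2 grp.rcosetsI nrm.subset)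

lemma coset_mult:
  "g \<in> carrier G \<Longrightarrow> h \<in> carrier G \<Longrightarrow> (N #>\<^bsub>G\<^esub> g) \<otimes>\<^bsub>Q\<^esub> (N #>\<^bsub>G\<^esub> h) = N #>\<^bsub>G\<^esub> (g \<otimes>\<^bsub>G\<^esub> h)"
  by (simp add: Gquot2_def nrm.rcos_sum)

lemma Gquot2_cosetE:
  assumes "C \<in> carrier Q" obtains g where "g \<in> carrier G" "C = N #>\<^bsub>G\<^esub> g"
  using assms by (auto simp: carrier_Gquot2 RCOSETS_def)

lemma coset_self: "g \<in> carrier G \<Longrightarrow> g \<in> N #>\<^bsub>G\<^esub> g"
  by (rule grp.rcos_self[OF _ nrm.subgroup_axioms])

lemma coset_eq_of_mem:
  "g \<in> carrier G \<Longrightarrow> x \<in> N #>\<^bsub>G\<^esub> g \<Longrightarrow> x \<in> carrier G \<and> N #>\<^bsub>G\<^esub> x = N #>\<^bsub>G\<^esub> g"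
  using grp.repr_independence[OF _ _ nrm.subgroup_axioms] grp.r_coset_subset_G[OF nrm.subset]
  by blast

lemma istopology_Tquot2: "istopology (\<lambda>U. U \<subseteq> carrier Q \<and> openin T (\<Union>U))"
proof -
  have inter: "openin T (\<Union>(S \<inter> U))"
    if S: "S \<subseteq> carrier Q" "openin T (\<Union>S)" and U: "U \<subseteq> carrier Q" "openin T (\<Union>U)" for S U
  proof -
    have "\<Union>S \<inter> \<Union>U \<subseteq> \<Union>(S \<inter> U)"
    proof
      fix x assume "x \<in> \<Union>S \<inter> \<Union>U"
      then obtain A B where A: "A \<in> S" "x \<in> A" and B: "B \<in> U" "x \<in> B" by blast
      have "A = B"
      proof (rule ccontr)
        assume "A \<noteq> B"
        moreover have "A \<in> rcosets\<^bsub>G\<^esub> N" "B \<in> rcosets\<^bsub>G\<^esub> N"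
          using A(1) B(1) S(1) U(1) by (auto simp: carrier_Gquot2)
        ultimately have "disjnt A B"
          by (rule pairwiseD[OF grp.rcos_disjoint[OF nrm.subgroup_axioms], rotated -1])
        with A(2) B(2) show False by (auto simp: disjnt_def)
      qed
      with A B show "x \<in> \<Union>(S \<inter> U)" by blast
    qed
    then have "\<Union>(S \<inter> U) = \<Union>S \<inter> \<Union>U" by blast
    then show ?thesis using S(2) U(2) by (simp add: openin_Int)
  qed
  have union: "openin T (\<Union>(\<Union>K))" if "\<forall>U\<in>K. U \<subseteq> carrier Q \<and> openin T (\<Union>U)" for K
  proof -
    have "\<Union>(\<Union>K) = (\<Union>U\<in>K. \<Union>U)" by blast
    then show ?thesis using that by auto
  qed
  show ?thesis unfolding istopology_def
    by (intro conjI allI impI) (use inter union in blast)+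
qed

lemma openin_Tquot2: "openin TQ U \<longleftrightarrow> U \<subseteq> carrier Q \<and> openin T (\<Union>U)"
  unfolding Tquot2_def using istopology_Tquot2 by simp

lemma topspace_Tquot2: "topspace TQ = carrier Q"
proof
  show "topspace TQ \<subseteq> carrier Q"
    using openin_Tquot2 openin_topspace by blast
  have "\<Union>(carrier Q) = carrier G"
    by (simp add: carrier_Gquot2 grp.rcosets_part_G[OF nrm.subgroup_axioms])
  then have "openin TQ (carrier Q)"
    by (simp add: openin_Tquot2 topspace_eq[symmetric])
  then show "carrier Q \<subseteq> topspace TQ"
    by (rule openin_subset)
qed

lemma continuous_map_coset: "continuous_map T TQ (\<lambda>g. N #>\<^bsub>G\<^esub> g)"
  unfolding continuous_map
proof (intro conjI allI impI)
  show "(\<lambda>g. N #>\<^bsub>G\<^esub> g) ` topspace T \<subseteq> topspace TQ"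
    using coset_in_Gquot2 by (auto simp: topspace_Tquot2 topspace_eq)
  fix U assume U: "openin TQ U"
  have "{x \<in> topspace T. N #>\<^bsub>G\<^esub> x \<in> U} = \<Union>U"
  proof
    show "{x \<in> topspace T. N #>\<^bsub>G\<^esub> x \<in> U} \<subseteq> \<Union>U"
      using coset_self by (auto simp: topspace_eq)
    show "\<Union>U \<subseteq> {x \<in> topspace T. N #>\<^bsub>G\<^esub> x \<in> U}"
    proof
      fix x assume "x \<in> \<Union>U"
      then obtain C where C: "C \<in> U" "x \<in> C" by auto
      have "C \<in> carrier Q" using C(1) U by (auto simp: openin_Tquot2)
      then obtain g where g: "g \<in> carrier G" "C = N #>\<^bsub>G\<^esub> g" by (rule Gquot2_cosetE)
      then show "x \<in> {x \<in> topspace T. N #>\<^bsub>G\<^esub> x \<in> U}"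
        using coset_eq_of_mem[OF g(1)] C by (auto simp: topspace_eq)
    qed
  qed
  then show "openin T {x \<in> topspace T. N #>\<^bsub>G\<^esub> x \<in> U}"
    using U openin_Tquot2 by simp
qed

context
  fixes \<psi> assumes \<psi>: "\<psi> \<in> H1 G T q"
begin

lemma H1_value_mod: "x \<in> carrier G \<Longrightarrow> \<psi> x mod int q = \<psi> x"
  using H1_continuous[OF \<psi>] by (auto simp: continuous_map_ZqT_iff topspace_eq Zq_def)

lemma H1_eq_0_if_dvd: "x \<in> carrier G \<Longrightarrow> int q dvd \<psi> x \<Longrightarrow> \<psi> x = 0"
  using H1_value_mod by (metis dvd_imp_mod_0)

lemma H1_one: "\<psi> \<one>\<^bsub>G\<^esub> = 0"
proof (rule H1_eq_0_if_dvd)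
  have "\<psi> \<one>\<^bsub>G\<^esub> mod int q = (\<psi> \<one>\<^bsub>G\<^esub> + \<psi> \<one>\<^bsub>G\<^esub>) mod int q"
    using H1_hom[OF \<psi>, of "\<one>\<^bsub>G\<^esub>" "\<one>\<^bsub>G\<^esub>"] H1_value_mod by simp
  then show "int q dvd \<psi> \<one>\<^bsub>G\<^esub>" by (simp add: mod_eq_dvd_iff)
qed simp

lemma H1_inv: "x \<in> carrier G \<Longrightarrow> int q dvd (\<psi> x + \<psi> (inv\<^bsub>G\<^esub> x))"
  using H1_hom[OF \<psi>, of x "inv\<^bsub>G\<^esub> x"] H1_one by (simp add: mod_eq_0_iff_dvd)

lemma H1_nat_pow: "x \<in> carrier G \<Longrightarrow> \<psi> (x [^]\<^bsub>G\<^esub> (n::nat)) = (int n * \<psi> x) mod int q"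
proof (induction n)
  case (Suc n)
  then show ?case by (simp add: H1_hom[OF \<psi>] mod_simps algebra_simps)
qed (simp add: H1_one)

lemma subgroup_H1_kernel: "subgroup {g \<in> carrier G. \<psi> g = 0} G"
proof (rule grp.subgroupI)
  fix a assume "a \<in> {g \<in> carrier G. \<psi> g = 0}"
  then show "inv\<^bsub>G\<^esub> a \<in> {g \<in> carrier G. \<psi> g = 0}"
    using H1_inv[of a] H1_eq_0_if_dvd[of "inv\<^bsub>G\<^esub> a"] by auto
qed (use H1_one in \<open>auto simp: H1_hom[OF \<psi>]\<close>)

lemma closedin_H1_kernel: "closedin T {g \<in> carrier G. \<psi> g = 0}"
proof -
  have "topspace T - {g \<in> carrier G. \<psi> g = 0} = (\<Union>y\<in>{y. y \<noteq> 0}. {x \<in> topspace T. \<psi> x = y})"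
    by (auto simp: topspace_eq)
  also have "openin T \<dots>"
    using H1_continuous[OF \<psi>] by (intro openin_Union) (auto simp: continuous_map_ZqT_iff)
  finally show ?thesis unfolding closedin_def by (auto simp: topspace_eq)
qed

lemma H1_vanishes_on_Gsub2: "N \<subseteq> {g \<in> carrier G. \<psi> g = 0}"
proof -
  have "\<psi> (x \<otimes>\<^bsub>G\<^esub> y \<otimes>\<^bsub>G\<^esub> inv\<^bsub>G\<^esub> x \<otimes>\<^bsub>G\<^esub> inv\<^bsub>G\<^esub> y) = 0"
    if "x \<in> carrier G" "y \<in> carrier G" for x y
  proof -
    have "\<psi> (x \<otimes>\<^bsub>G\<^esub> y \<otimes>\<^bsub>G\<^esub> inv\<^bsub>G\<^esub> x \<otimes>\<^bsub>G\<^esub> inv\<^bsub>G\<^esub> y)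
        = ((\<psi> x + \<psi> (inv\<^bsub>G\<^esub> x)) + (\<psi> y + \<psi> (inv\<^bsub>G\<^esub> y))) mod int q"
      using that by (simp add: H1_hom[OF \<psi>] mod_simps ac_simps)
    also have "\<dots> = 0"
      using dvd_add[OF H1_inv H1_inv] that by (simp add: mod_eq_0_iff_dvd)
    finally show ?thesis .
  qed
  then have "{x [^]\<^bsub>G\<^esub> q | x. x \<in> carrier G}
      \<union> {x \<otimes>\<^bsub>G\<^esub> y \<otimes>\<^bsub>G\<^esub> inv\<^bsub>G\<^esub> x \<otimes>\<^bsub>G\<^esub> inv\<^bsub>G\<^esub> y | x y. x \<in> carrier G \<and> y \<in> carrier G}
      \<subseteq> {g \<in> carrier G. \<psi> g = 0}"
    by (auto simp: H1_nat_pow)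
  then show ?thesis
    unfolding Gsub2_def
    by (intro closure_of_minimal closedin_H1_kernel grp.generate_subgroup_incl subgroup_H1_kernel)
qed

lemma H1_coset: "g \<in> carrier G \<Longrightarrow> x \<in> N #>\<^bsub>G\<^esub> g \<Longrightarrow> \<psi> x = \<psi> g"
  using H1_vanishes_on_Gsub2 by (auto simp: r_coset_def H1_hom[OF \<psi>] H1_value_mod)

lemma factor1_coset: "g \<in> carrier G \<Longrightarrow> factor1 G T q \<psi> (N #>\<^bsub>G\<^esub> g) = \<psi> g"
  using someI[of "\<lambda>x. x \<in> N #>\<^bsub>G\<^esub> g", OF coset_self] H1_coset coset_in_Gquot2
  by (simp add: factor1_def)

lemma Union_fibre_factor1:
  "\<Union>{C \<in> topspace TQ. factor1 G T q \<psi> C = y} = {x \<in> topspace T. \<psi> x = y}"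
proof
  show "\<Union>{C \<in> topspace TQ. factor1 G T q \<psi> C = y} \<subseteq> {x \<in> topspace T. \<psi> x = y}"
  proof
    fix x assume "x \<in> \<Union>{C \<in> topspace TQ. factor1 G T q \<psi> C = y}"
    then obtain C where C: "C \<in> carrier Q" "factor1 G T q \<psi> C = y" "x \<in> C"
      by (auto simp: topspace_Tquot2)
    then obtain g where g: "g \<in> carrier G" "C = N #>\<^bsub>G\<^esub> g" by (elim Gquot2_cosetE)
    then show "x \<in> {x \<in> topspace T. \<psi> x = y}"
      using C coset_eq_of_mem[OF g(1)] H1_coset[OF g(1)] by (simp add: factor1_coset topspace_eq)
  qed
  show "{x \<in> topspace T. \<psi> x = y} \<subseteq> \<Union>{C \<in> topspace TQ. factor1 G T q \<psi> C = y}"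
    using coset_self coset_in_Gquot2 factor1_coset by (auto simp: topspace_Tquot2 topspace_eq)
qed

lemma factor1_in_H1: "factor1 G T q \<psi> \<in> H1 Q TQ q"
proof (rule H1I)
  show "continuous_map TQ (ZqT q) (factor1 G T q \<psi>)"
    unfolding continuous_map_ZqT_iff
  proof (intro conjI ballI allI)
    fix C assume "C \<in> topspace TQ"
    then obtain g where "g \<in> carrier G" "C = N #>\<^bsub>G\<^esub> g"
      by (auto simp: topspace_Tquot2 elim: Gquot2_cosetE)
    then show "factor1 G T q \<psi> C \<in> Zq q"
      using H1_continuous[OF \<psi>] by (auto simp: factor1_coset continuous_map_ZqT_iff topspace_eq)
  next
    fix y
    have "openin T {x \<in> topspace T. \<psi> x = y}"
      using H1_continuous[OF \<psi>] by (simp add: continuous_map_ZqT_iff)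
    then show "openin TQ {C \<in> topspace TQ. factor1 G T q \<psi> C = y}"
      by (simp add: openin_Tquot2 topspace_Tquot2 Union_fibre_factor1[symmetric])
  qed
  show "factor1 G T q \<psi> C = 0" if "C \<notin> carrier Q" for C
    using that by (simp add: factor1_def)
  fix C D assume "C \<in> carrier Q" "D \<in> carrier Q"
  then obtain g h where "g \<in> carrier G" "C = N #>\<^bsub>G\<^esub> g" "h \<in> carrier G" "D = N #>\<^bsub>G\<^esub> h"
    by (metis Gquot2_cosetE)
  then show "factor1 G T q \<psi> (C \<otimes>\<^bsub>Q\<^esub> D) = (factor1 G T q \<psi> C + factor1 G T q \<psi> D) mod int q"
    by (simp add: coset_mult factor1_coset H1_hom[OF \<psi>])
qed

lemma infl1_factor1: "infl1 G T q (factor1 G T q \<psi>) = \<psi>"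
  by (rule ext) (simp add: infl1_def factor1_coset H1_vanishes[OF \<psi>])

end

lemma infl1_in_H1:
  assumes \<psi>: "\<psi> \<in> H1 Q TQ q" shows "infl1 G T q \<psi> \<in> H1 G T q"
proof (rule H1I)
  show "continuous_map T (ZqT q) (infl1 G T q \<psi>)"
    by (rule continuous_map_eq[OF continuous_map_compose[OF continuous_map_coset H1_continuous[OF \<psi>]]])
       (simp add: infl1_def topspace_eq)
  show "infl1 G T q \<psi> x = 0" if "x \<notin> carrier G" for x
    using that by (simp add: infl1_def)
  fix g h assume g: "g \<in> carrier G" and h: "h \<in> carrier G"
  then show "infl1 G T q \<psi> (g \<otimes>\<^bsub>G\<^esub> h) = (infl1 G T q \<psi> g + infl1 G T q \<psi> h) mod int q"
    using H1_hom[OF \<psi> coset_in_Gquot2[OF g] coset_in_Gquot2[OF h]] by (simp add: infl1_def coset_mult)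
qed

lemma inj_on_infl1: "inj_on (infl1 G T q) (H1 Q TQ q)"
proof (rule inj_onI, rule ext)
  fix \<psi> \<psi>' C assume \<psi>: "\<psi> \<in> H1 Q TQ q" and \<psi>': "\<psi>' \<in> H1 Q TQ q"
    and eq: "infl1 G T q \<psi> = infl1 G T q \<psi>'"
  show "\<psi> C = \<psi>' C"
  proof (cases "C \<in> carrier Q")
    case True
    then obtain g where "g \<in> carrier G" "C = N #>\<^bsub>G\<^esub> g" by (rule Gquot2_cosetE)
    then show ?thesis using fun_cong[OF eq, of g] by (simp add: infl1_def)
  qed (simp add: H1_vanishes[OF \<psi>] H1_vanishes[OF \<psi>'])
qed

lemma factor1_infl1: "\<psi> \<in> H1 Q TQ q \<Longrightarrow> factor1 G T q (infl1 G T q \<psi>) = \<psi>"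
  using inj_on_infl1 infl1_in_H1 factor1_in_H1 infl1_factor1 by (metis inj_onD)

end

section \<open>Cup products and inflation in degree 2\<close>

definition cup_cocycle :: "('a, 'b) monoid_scheme \<Rightarrow> nat \<Rightarrow> ('a \<Rightarrow> int) \<Rightarrow> ('a \<Rightarrow> int) \<Rightarrow> ('a \<times> 'a \<Rightarrow> int)" where
  "cup_cocycle G q \<psi> \<psi>' =
     (\<lambda>(g, h). if g \<in> carrier G \<and> h \<in> carrier G then (\<psi> g * \<psi>' h) mod int q else 0)"

lemma cup_eq_cls2: "cup G T q \<psi> \<psi>' = cls2 G T q (cup_cocycle G q \<psi> \<psi>')"
  by (simp add: cup_def cup_cocycle_def)

lemma cup_cocycle_in_Z2:
  assumes q: "q > 0" and grp: "group G" and top: "topspace T = carrier G"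
    and \<psi>: "\<psi> \<in> H1 G T q" and \<psi>': "\<psi>' \<in> H1 G T q"
  shows "cup_cocycle G q \<psi> \<psi>' \<in> Z2 G T q"
proof (rule Z2I)
  let ?c = "cup_cocycle G q \<psi> \<psi>'"
  show "continuous_map (prod_topology T T) (ZqT q) ?c"
    by (rule continuous_map_ZqT_combine[where \<phi> = "\<lambda>a b. (a * b) mod int q",
          OF continuous_map_compose[OF continuous_map_fst H1_continuous[OF \<psi>]]
             continuous_map_compose[OF continuous_map_snd H1_continuous[OF \<psi>']]])
       (auto simp: cup_cocycle_def top intro: mod_in_Zq[OF q])
  show "?c x = 0" if "x \<notin> carrier G \<times> carrier G" for x
    using that by (cases x) (auto simp: cup_cocycle_def)
  fix g h k assume g: "g \<in> carrier G" and h: "h \<in> carrier G" and k: "k \<in> carrier G"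
  have gh: "g \<otimes>\<^bsub>G\<^esub> h \<in> carrier G" and hk: "h \<otimes>\<^bsub>G\<^esub> k \<in> carrier G"
    using g h k grp by (auto intro: group.is_monoid monoid.m_closed)
  have hom: "int q dvd (\<phi> (x \<otimes>\<^bsub>G\<^esub> y) - \<phi> x - \<phi> y)"
    if "\<phi> \<in> H1 G T q" "x \<in> carrier G" "y \<in> carrier G" for \<phi> x y
    using H1_hom[OF that] dvd_mod_diff_self[of "int q" "\<phi> x + \<phi> y"] by (simp add: diff_diff_eq)
  have prod: "int q dvd (?c (x, y) - \<psi> x * \<psi>' y)" if "x \<in> carrier G" "y \<in> carrier G" for x y
    using that dvd_mod_diff_self[of "int q" "\<psi> x * \<psi>' y"] by (simp add: cup_cocycle_def)
  show "int q dvd (?c (h, k) - ?c (g \<otimes>\<^bsub>G\<^esub> h, k) + ?c (g, h \<otimes>\<^bsub>G\<^esub> k) - ?c (g, h))"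
    using hom[OF \<psi> g h] hom[OF \<psi>' h k] prod[OF h k] prod[OF gh k] prod[OF g hk] prod[OF g h]
    by algebra
qed

lemma cup_in_H2:
  "q > 0 \<Longrightarrow> group G \<Longrightarrow> topspace T = carrier G \<Longrightarrow> \<psi> \<in> H1 G T q \<Longrightarrow> \<psi>' \<in> H1 G T q
    \<Longrightarrow> cup G T q \<psi> \<psi>' \<in> carrier (H2 G T q)"
  by (simp add: cup_eq_cls2 H2_def cup_cocycle_in_Z2)

lemma cup_add1_left:
  assumes "q > 0" "group G" "topspace T = carrier G"
    and "\<psi> \<in> H1 G T q" "\<psi>' \<in> H1 G T q" "\<phi> \<in> H1 G T q"
  shows "cup G T q (add1 q \<psi> \<psi>') \<phi> = cup G T q \<psi> \<phi> \<otimes>\<^bsub>H2 G T q\<^esub> cup G T q \<psi>' \<phi>"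
proof -
  have "add1 q (cup_cocycle G q \<psi> \<phi>) (cup_cocycle G q \<psi>' \<phi>) = cup_cocycle G q (add1 q \<psi> \<psi>') \<phi>"
    by (rule ext) (auto simp: cup_cocycle_def add1_def mod_simps distrib_right)
  then show ?thesis
    using assms by (simp add: cup_eq_cls2 H2_mult_cls2 cup_cocycle_in_Z2)
qed

lemma cup_add1_right:
  assumes "q > 0" "group G" "topspace T = carrier G"
    and "\<psi> \<in> H1 G T q" "\<phi> \<in> H1 G T q" "\<phi>' \<in> H1 G T q"
  shows "cup G T q \<psi> (add1 q \<phi> \<phi>') = cup G T q \<psi> \<phi> \<otimes>\<^bsub>H2 G T q\<^esub> cup G T q \<psi> \<phi>'"
proof -
  have "add1 q (cup_cocycle G q \<psi> \<phi>) (cup_cocycle G q \<psi> \<phi>') = cup_cocycle G q \<psi> (add1 q \<phi> \<phi>')"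
    by (rule ext) (auto simp: cup_cocycle_def add1_def mod_simps distrib_left)
  then show ?thesis
    using assms by (simp add: cup_eq_cls2 H2_mult_cls2 cup_cocycle_in_Z2)
qed

definition infl_cocycle :: "('a, 'b) monoid_scheme \<Rightarrow> 'a topology \<Rightarrow> nat \<Rightarrow> ('a set \<times> 'a set \<Rightarrow> int) \<Rightarrow> ('a \<times> 'a \<Rightarrow> int)" where
  "infl_cocycle G T q f = (\<lambda>(g, h). if g \<in> carrier G \<and> h \<in> carrier G
      then f (Gsub2 G T q #>\<^bsub>G\<^esub> g, Gsub2 G T q #>\<^bsub>G\<^esub> h) else 0)"

lemma infl2_eq: "infl2 G T q A = cls2 G T q (infl_cocycle G T q (SOME f. f \<in> A))"
  by (simp add: infl2_def infl_cocycle_def)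

context Zq_topological_group
begin

sublocale H2Q: comm_group "H2 Q TQ q" by (rule comm_group_H2[OF q_pos])
sublocale H2G: comm_group "H2 G T q" by (rule comm_group_H2[OF q_pos])

lemma infl_cocycle_in_Z2:
  assumes f: "f \<in> Z2 Q TQ q" shows "infl_cocycle G T q f \<in> Z2 G T q"
proof (rule Z2I)
  have "continuous_map (prod_topology T T) (prod_topology TQ TQ) (\<lambda>x. (N #>\<^bsub>G\<^esub> fst x, N #>\<^bsub>G\<^esub> snd x))"
    using continuous_map_compose[OF continuous_map_fst continuous_map_coset]
      continuous_map_compose[OF continuous_map_snd continuous_map_coset]
    by (intro continuous_map_pairedI) (auto simp: o_def)
  then show "continuous_map (prod_topology T T) (ZqT q) (infl_cocycle G T q f)"
    by (rule continuous_map_eq[OF continuous_map_compose[OF _ Z2_continuous[OF f]]])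
       (auto simp: infl_cocycle_def topspace_eq)
  show "infl_cocycle G T q f x = 0" if "x \<notin> carrier G \<times> carrier G" for x
    using that by (cases x) (auto simp: infl_cocycle_def)
  fix g h k assume g: "g \<in> carrier G" and h: "h \<in> carrier G" and k: "k \<in> carrier G"
  then show "int q dvd (infl_cocycle G T q f (h, k) - infl_cocycle G T q f (g \<otimes>\<^bsub>G\<^esub> h, k)
      + infl_cocycle G T q f (g, h \<otimes>\<^bsub>G\<^esub> k) - infl_cocycle G T q f (g, h))"
    using Z2_cocycle[OF f coset_in_Gquot2[OF g] coset_in_Gquot2[OF h] coset_in_Gquot2[OF k]]
    by (simp add: infl_cocycle_def coset_mult)
qed

lemma cohom2_infl_cocycle:
  assumes "cohom2 Q TQ q f f'" shows "cohom2 G T q (infl_cocycle G T q f) (infl_cocycle G T q f')"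
proof -
  from assms obtain c where c: "c \<in> C1 Q TQ q" and cob: "\<And>x y. x \<in> carrier Q \<Longrightarrow> y \<in> carrier Q
      \<Longrightarrow> int q dvd (f (x, y) - f' (x, y) - (c y - c (x \<otimes>\<^bsub>Q\<^esub> y) + c x))"
    unfolding cohom2_iff by blast
  have "infl1 G T q c \<in> C1 G T q"
    using c unfolding C1_def
    by (auto intro!: continuous_map_eq[OF continuous_map_compose[OF continuous_map_coset]]
        simp: infl1_def topspace_eq)
  then show ?thesis
    unfolding cohom2_iff
    using cob[OF coset_in_Gquot2 coset_in_Gquot2]
    by (intro bexI[of _ "infl1 G T q c"]) (simp_all add: infl_cocycle_def infl1_def coset_mult)
qed

lemma infl2_cls2: "f \<in> Z2 Q TQ q \<Longrightarrow> infl2 G T q (cls2 Q TQ q f) = cls2 G T q (infl_cocycle G T q f)"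
  by (simp add: infl2_eq cls2_eq[OF q_pos] cohom2_sym[OF q_pos] cohom2_infl_cocycle
      cohom2_some_cls2[OF q_pos])

lemma infl2_hom: "infl2 G T q \<in> hom (H2 Q TQ q) (H2 G T q)"
proof (rule homI)
  fix A assume "A \<in> carrier (H2 Q TQ q)"
  then show "infl2 G T q A \<in> carrier (H2 G T q)"
    by (auto simp: H2_def infl2_cls2 infl_cocycle_in_Z2)
next
  fix A B assume "A \<in> carrier (H2 Q TQ q)" "B \<in> carrier (H2 Q TQ q)"
  then obtain f f' where "f \<in> Z2 Q TQ q" "A = cls2 Q TQ q f" "f' \<in> Z2 Q TQ q" "B = cls2 Q TQ q f'"
    by (auto simp: H2_def)
  moreover have "infl_cocycle G T q (add1 q f f') = add1 q (infl_cocycle G T q f) (infl_cocycle G T q f')"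
    by (rule ext) (auto simp: infl_cocycle_def add1_def)
  ultimately show "infl2 G T q (A \<otimes>\<^bsub>H2 Q TQ q\<^esub> B) = infl2 G T q A \<otimes>\<^bsub>H2 G T q\<^esub> infl2 G T q B"
    by (simp add: H2_mult_cls2[OF q_pos] Z2_add1[OF q_pos] infl2_cls2 infl_cocycle_in_Z2)
qed

lemma infl2_cup:
  assumes \<psi>: "\<psi> \<in> H1 Q TQ q" and \<psi>': "\<psi>' \<in> H1 Q TQ q"
  shows "infl2 G T q (cup Q TQ q \<psi> \<psi>') = cup G T q (infl1 G T q \<psi>) (infl1 G T q \<psi>')"
proof -
  have "infl_cocycle G T q (cup_cocycle Q q \<psi> \<psi>') = cup_cocycle G q (infl1 G T q \<psi>) (infl1 G T q \<psi>')"
    by (rule ext) (auto simp: infl_cocycle_def cup_cocycle_def infl1_def coset_in_Gquot2)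
  then show ?thesis
    using cup_cocycle_in_Z2[OF q_pos group_Gquot2 topspace_Tquot2 \<psi> \<psi>']
    by (simp add: cup_eq_cls2 infl2_cls2)
qed

end

definition finsupp_on :: "'z set \<Rightarrow> ('z \<Rightarrow> int) \<Rightarrow> bool" where
  "finsupp_on A F \<longleftrightarrow> finite {z. F z \<noteq> 0} \<and> {z. F z \<noteq> 0} \<subseteq> A"

lemma finsupp_on_delta: "z \<in> A \<Longrightarrow> finsupp_on A (delta z)"
  by (simp add: finsupp_on_def delta_def)

lemma finsupp_on_neg: "finsupp_on A (\<lambda>z. - F z) \<longleftrightarrow> finsupp_on A F"
  by (simp add: finsupp_on_def)

lemma finsupp_on_add:
  assumes "finsupp_on A F" "finsupp_on A F'" shows "finsupp_on A (\<lambda>z. F z + F' z)"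
proof -
  have "{z. F z + F' z \<noteq> 0} \<subseteq> {z. F z \<noteq> 0} \<union> {z. F' z \<noteq> 0}" by auto
  with assms show ?thesis unfolding finsupp_on_def by (meson finite_Un finite_subset le_sup_iff subset_trans)
qed

lemma finsupp_on_zspan:
  "F \<in> zspan S \<Longrightarrow> (\<And>s. s \<in> S \<Longrightarrow> finsupp_on A s) \<Longrightarrow> finsupp_on A F"
  by (induction rule: zspan.induct) (auto simp: finsupp_on_neg intro: finsupp_on_add,
      simp add: finsupp_on_def)

lemma finsupp_on_delta_relation:
  assumes "x \<in> A" "y \<in> A" "w \<in> A"
  shows "finsupp_on A (\<lambda>z. delta x z - delta y z - delta w z)"
proof -
  have supp: "{z. delta x z - delta y z - delta w z \<noteq> 0} \<subseteq> {x, y, w}"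
    by (auto simp: delta_def)
  then have "finite {z. delta x z - delta y z - delta w z \<noteq> 0}"
    by (rule finite_subset) simp
  with supp assms show ?thesis by (auto simp: finsupp_on_def)
qed

definition lincomb :: "('c, 'd) monoid_scheme \<Rightarrow> ('z \<Rightarrow> 'c) \<Rightarrow> ('z \<Rightarrow> int) \<Rightarrow> 'z set \<Rightarrow> 'c" where
  "lincomb H e F A = finprod H (\<lambda>z. e z [^]\<^bsub>H\<^esub> F z) A"

context comm_group
begin

lemma int_pow_funcset: "e \<in> A \<rightarrow> carrier G \<Longrightarrow> (\<lambda>z. e z [^] (F z :: int)) \<in> A \<rightarrow> carrier G"
  by auto

lemma lincomb_closed: "e \<in> A \<rightarrow> carrier G \<Longrightarrow> lincomb G e F A \<in> carrier G"
  unfolding lincomb_def by (rule finprod_closed[OF int_pow_funcset])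

lemma lincomb_mono_neutral:
  assumes "finite B" "{z. F z \<noteq> 0} \<subseteq> A" "A \<subseteq> B" "e \<in> B \<rightarrow> carrier G"
  shows "lincomb G e F A = lincomb G e F B"
  unfolding lincomb_def
proof (rule finprod_mono_neutral_cong_left[OF assms(1,3)])
  fix z assume "z \<in> B - A"
  with assms(2) have "F z = 0" by blast
  then show "e z [^] F z = \<one>" by simp
qed (use int_pow_funcset[OF assms(4)] in auto)

lemma lincomb_add:
  assumes e: "e \<in> A \<rightarrow> carrier G"
  shows "lincomb G e (\<lambda>z. F z + F' z) A = lincomb G e F A \<otimes> lincomb G e F' A"
proof -
  have "lincomb G e (\<lambda>z. F z + F' z) A = finprod G (\<lambda>z. e z [^] F z \<otimes> e z [^] F' z) A"
    unfolding lincomb_def using e by (intro finprod_cong') (auto simp: int_pow_mult[OF funcset_mem[OF e]])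
  also have "\<dots> = lincomb G e F A \<otimes> lincomb G e F' A"
    unfolding lincomb_def using int_pow_funcset[OF e] by (intro finprod_multf) auto
  finally show ?thesis .
qed

lemma lincomb_neg:
  assumes e: "e \<in> A \<rightarrow> carrier G"
  shows "lincomb G e (\<lambda>z. - F z) A = inv (lincomb G e F A)"
proof (rule inv_equality[symmetric])
  have "lincomb G e (\<lambda>z. - F z) A \<otimes> lincomb G e F A = lincomb G e (\<lambda>_. 0) A"
    using lincomb_add[OF e, of "\<lambda>z. - F z" F] by simp
  then show "lincomb G e (\<lambda>z. - F z) A \<otimes> lincomb G e F A = \<one>"
    by (simp add: lincomb_def)
qed (use lincomb_closed[OF e] in auto)

lemma lincomb_delta:
  assumes e: "e \<in> A \<rightarrow> carrier G" and z: "z \<in> A" and A: "finite A"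
  shows "lincomb G e (delta z) A = e z"
proof -
  have "lincomb G e (delta z) A = lincomb G e (delta z) {z}"
    by (rule lincomb_mono_neutral[symmetric]) (use A z e in \<open>auto simp: delta_def\<close>)
  also have "\<dots> = e z [^] (1::int) \<otimes> finprod G (\<lambda>y. e y [^] delta z y) {}"
    unfolding lincomb_def using funcset_mem[OF e z] by (subst finprod_insert) (auto simp: delta_def)
  finally show ?thesis using funcset_mem[OF e z] by simp
qed

end

lemma hom_finprod:
  assumes H: "comm_group H" and K: "comm_group K" and h: "h \<in> hom H K"
    and f: "f \<in> A \<rightarrow> carrier H"
  shows "h (finprod H f A) = finprod K (h \<circ> f) A"
proof -
  interpret H: comm_group H by (rule H)
  interpret K: comm_group K by (rule K)
  interpret hk: group_hom H K h
    by (simp add: group_hom_def group_hom_axioms_def h H.is_group K.is_group)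
  show ?thesis using f
  proof (induction A rule: infinite_finite_induct)
    case (insert x A)
    then have "f x \<in> carrier H" "f \<in> A \<rightarrow> carrier H" "h \<circ> f \<in> insert x A \<rightarrow> carrier K"
      by (auto simp: Pi_iff)
    with insert show ?case by (simp add: hk.hom_mult Pi_iff)
  qed simp_all
qed

lemma hom_lincomb:
  assumes H: "comm_group H" and K: "comm_group K" and h: "h \<in> hom H K"
    and e: "e \<in> A \<rightarrow> carrier H"
  shows "h (lincomb H e F A) = lincomb K (h \<circ> e) F A"
proof -
  interpret H: comm_group H by (rule H)
  interpret K: comm_group K by (rule K)
  have "h (lincomb H e F A) = finprod K (h \<circ> (\<lambda>z. e z [^]\<^bsub>H\<^esub> F z)) A"
    unfolding lincomb_def by (rule hom_finprod[OF H K h H.int_pow_funcset[OF e]])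
  also have "\<dots> = lincomb K (h \<circ> e) F A"
    unfolding lincomb_def using e
    by (intro K.finprod_cong')
       (auto simp: hom_int_pow[OF h funcset_mem[OF e] H.is_group K.is_group]
          intro: K.int_pow_closed hom_in_carrier[OF h funcset_mem[OF e]])
  finally show ?thesis .
qed

section \<open>The decomposable part of H^2(G^[2]) as the image of formal cup products\<close>

context Zq_topological_group
begin

abbreviation cups_Gquot2 where
  "cups_Gquot2 \<equiv> {c. \<exists>\<psi>\<in>H1 Q TQ q. \<exists>\<psi>'\<in>H1 Q TQ q. c = cup Q TQ q \<psi> \<psi>'}"

abbreviation inflated_trivial_cups where
  "inflated_trivial_cups \<equiv> {c. \<exists>\<psi>\<in>H1 Q TQ q. \<exists>\<psi>'\<in>H1 Q TQ q.
     c = cup Q TQ q \<psi> \<psi>' \<and> infl2 G T q c = \<one>\<^bsub>H2 G T q\<^esub>}"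

lemma factor1_add1: "factor1 G T q (add1 q \<psi> \<psi>') = add1 q (factor1 G T q \<psi>) (factor1 G T q \<psi>')"
  by (rule ext) (simp add: factor1_def add1_def)

definition cup_quot :: "('a \<Rightarrow> int) \<times> ('a \<Rightarrow> int) \<Rightarrow> ('a set \<times> 'a set \<Rightarrow> int) set" where
  "cup_quot z = cup Q TQ q (factor1 G T q (fst z)) (factor1 G T q (snd z))"

text \<open>F represents an element of H^1(G) \<otimes> H^1(G), as in two_quadratic; its cup product is
  taken on G^[2] through the inverse of inflation.\<close>
definition cup_formal_quot :: "(('a \<Rightarrow> int) \<times> ('a \<Rightarrow> int) \<Rightarrow> int) \<Rightarrow> ('a set \<times> 'a set \<Rightarrow> int) set" where
  "cup_formal_quot F = lincomb (H2 Q TQ q) cup_quot F {z. F z \<noteq> 0}"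

lemma cup_quot_in_H2:
  assumes "A \<subseteq> H1 G T q \<times> H1 G T q" shows "cup_quot \<in> A \<rightarrow> carrier (H2 Q TQ q)"
proof
  fix z assume "z \<in> A"
  with assms obtain \<psi> \<psi>' where "z = (\<psi>, \<psi>')" "\<psi> \<in> H1 G T q" "\<psi>' \<in> H1 G T q" by blast
  then show "cup_quot z \<in> carrier (H2 Q TQ q)"
    by (simp add: cup_quot_def cup_in_H2[OF q_pos group_Gquot2 topspace_Tquot2] factor1_in_H1)
qed

lemma cup_formal_quot_delta: "z \<in> H1 G T q \<times> H1 G T q \<Longrightarrow> cup_formal_quot (delta z) = cup_quot z"
  unfolding cup_formal_quot_def
  by (rule H2Q.lincomb_delta[OF cup_quot_in_H2]) (auto simp: delta_def)

lemma cup_formal_quot_neg: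
  "finsupp_on (H1 G T q \<times> H1 G T q) F \<Longrightarrow> cup_formal_quot (\<lambda>z. - F z) = inv\<^bsub>H2 Q TQ q\<^esub> cup_formal_quot F"
  unfolding cup_formal_quot_def finsupp_on_def by (simp add: H2Q.lincomb_neg cup_quot_in_H2)

lemma cup_formal_quot_add:
  assumes F: "finsupp_on (H1 G T q \<times> H1 G T q) F" and F': "finsupp_on (H1 G T q \<times> H1 G T q) F'"
  shows "cup_formal_quot (\<lambda>z. F z + F' z) = cup_formal_quot F \<otimes>\<^bsub>H2 Q TQ q\<^esub> cup_formal_quot F'"
proof -
  let ?A = "{z. F z \<noteq> 0} \<union> {z. F' z \<noteq> 0}"
  have A: "finite ?A" "?A \<subseteq> H1 G T q \<times> H1 G T q"
    using F F' by (auto simp: finsupp_on_def)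
  have "lincomb (H2 Q TQ q) cup_quot H {z. H z \<noteq> 0} = lincomb (H2 Q TQ q) cup_quot H ?A"
    if "{z. H z \<noteq> 0} \<subseteq> ?A" for H
    using that A by (intro H2Q.lincomb_mono_neutral cup_quot_in_H2) auto
  moreover have "{z. F z + F' z \<noteq> 0} \<subseteq> ?A" by auto
  ultimately show ?thesis
    unfolding cup_formal_quot_def using A by (simp add: H2Q.lincomb_add cup_quot_in_H2)
qed

lemma infl2_cup_formal_quot:
  assumes F: "finsupp_on (H1 G T q \<times> H1 G T q) F"
  shows "infl2 G T q (cup_formal_quot F) = cup_formal G T q F"
proof -
  let ?S = "{z. F z \<noteq> 0}"
  have S: "?S \<subseteq> H1 G T q \<times> H1 G T q" using F by (simp add: finsupp_on_def)
  have "infl2 G T q (cup_formal_quot F) = lincomb (H2 G T q) (infl2 G T q \<circ> cup_quot) F ?S"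
    unfolding cup_formal_quot_def
    by (rule hom_lincomb[OF comm_group_H2[OF q_pos] comm_group_H2[OF q_pos] infl2_hom cup_quot_in_H2[OF S]])
  also have "\<dots> = lincomb (H2 G T q) (\<lambda>(\<psi>, \<psi>'). cup G T q \<psi> \<psi>') F ?S"
    unfolding lincomb_def
  proof (rule H2G.finprod_cong'[OF refl])
    fix z assume "z \<in> ?S"
    with S obtain \<psi> \<psi>' where z: "z = (\<psi>, \<psi>')" "\<psi> \<in> H1 G T q" "\<psi>' \<in> H1 G T q" by blast
    then show "((infl2 G T q \<circ> cup_quot) z) [^]\<^bsub>H2 G T q\<^esub> F z
        = (case z of (\<psi>, \<psi>') \<Rightarrow> cup G T q \<psi> \<psi>') [^]\<^bsub>H2 G T q\<^esub> F z"
      by (simp add: cup_quot_def infl2_cup factor1_in_H1 infl1_factor1)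
  next
    show "(\<lambda>z. (case z of (\<psi>, \<psi>') \<Rightarrow> cup G T q \<psi> \<psi>') [^]\<^bsub>H2 G T q\<^esub> F z) \<in> ?S \<rightarrow> carrier (H2 G T q)"
      using S by (auto intro!: H2G.int_pow_closed cup_in_H2[OF q_pos grp.is_group topspace_eq])
  qed
  also have "\<dots> = cup_formal G T q F"
    by (simp add: lincomb_def cup_formal_def case_prod_unfold)
  finally show ?thesis .
qed

lemma H2dec_Gquot2_cup_formal_quot:
  assumes "x \<in> generate (H2 Q TQ q) cups_Gquot2"
  shows "\<exists>F. finsupp_on (H1 G T q \<times> H1 G T q) F \<and> cup_formal_quot F = x"
  using assms
proof (induction rule: generate.induct)
  case one
  have "cup_formal_quot (\<lambda>_. 0) = \<one>\<^bsub>H2 Q TQ q\<^esub>"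
    by (simp add: cup_formal_quot_def lincomb_def)
  then show ?case by (intro exI[of _ "\<lambda>_. 0"]) (simp add: finsupp_on_def)
next
  case (incl c)
  then obtain \<psi> \<psi>' where \<psi>: "\<psi> \<in> H1 Q TQ q" "\<psi>' \<in> H1 Q TQ q" and c: "c = cup Q TQ q \<psi> \<psi>'" by blast
  let ?z = "(infl1 G T q \<psi>, infl1 G T q \<psi>')"
  have z: "?z \<in> H1 G T q \<times> H1 G T q" using \<psi> by (simp add: infl1_in_H1)
  then have "finsupp_on (H1 G T q \<times> H1 G T q) (delta ?z) \<and> cup_formal_quot (delta ?z) = c"
    using \<psi> c by (simp add: finsupp_on_delta cup_formal_quot_delta cup_quot_def factor1_infl1)
  then show ?case by blast
next
  case (inv c)
  then obtain \<psi> \<psi>' where \<psi>: "\<psi> \<in> H1 Q TQ q" "\<psi>' \<in> H1 Q TQ q" and c: "c = cup Q TQ q \<psi> \<psi>'" by blast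
  let ?z = "(infl1 G T q \<psi>, infl1 G T q \<psi>')"
  have z: "?z \<in> H1 G T q \<times> H1 G T q" using \<psi> by (simp add: infl1_in_H1)
  then have "finsupp_on (H1 G T q \<times> H1 G T q) (\<lambda>y. - delta ?z y)
      \<and> cup_formal_quot (\<lambda>y. - delta ?z y) = inv\<^bsub>H2 Q TQ q\<^esub> c"
    using \<psi> c by (simp add: finsupp_on_neg finsupp_on_delta cup_formal_quot_neg cup_formal_quot_delta
        cup_quot_def factor1_infl1)
  then show ?case by blast
next
  case (eng c c')
  then obtain F F' where "finsupp_on (H1 G T q \<times> H1 G T q) F" "cup_formal_quot F = c"
    and "finsupp_on (H1 G T q \<times> H1 G T q) F'" "cup_formal_quot F' = c'" by blast
  then show ?case
    by (intro exI[of _ "\<lambda>z. F z + F' z"]) (simp add: finsupp_on_add cup_formal_quot_add)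
qed

lemma cup_formal_quot_relation:
  assumes x: "x \<in> H1 G T q \<times> H1 G T q" and y: "y \<in> H1 G T q \<times> H1 G T q"
    and w: "w \<in> H1 G T q \<times> H1 G T q"
    and rel: "cup_quot x = cup_quot y \<otimes>\<^bsub>H2 Q TQ q\<^esub> cup_quot w"
  shows "cup_formal_quot (\<lambda>z. delta x z - delta y z - delta w z) = \<one>\<^bsub>H2 Q TQ q\<^esub>"
proof -
  have cy: "cup_quot y \<in> carrier (H2 Q TQ q)" and cw: "cup_quot w \<in> carrier (H2 Q TQ q)"
    using cup_quot_in_H2[of "{y, w}"] y w by auto
  have dx: "finsupp_on (H1 G T q \<times> H1 G T q) (delta x)"
    and dy: "finsupp_on (H1 G T q \<times> H1 G T q) (delta y)"
    and dw: "finsupp_on (H1 G T q \<times> H1 G T q) (delta w)"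
    using x y w by (simp_all add: finsupp_on_delta)
  note neg = finsupp_on_neg[THEN iffD2]
  have "cup_formal_quot (\<lambda>z. delta x z - delta y z - delta w z)
      = cup_formal_quot (\<lambda>z. (delta x z + - delta y z) + - delta w z)"
    by simp
  also have "\<dots> = cup_formal_quot (\<lambda>z. delta x z + - delta y z)
      \<otimes>\<^bsub>H2 Q TQ q\<^esub> cup_formal_quot (\<lambda>z. - delta w z)"
    by (rule cup_formal_quot_add[OF finsupp_on_add[OF dx neg[OF dy]] neg[OF dw]])
  also have "\<dots> = cup_quot x \<otimes>\<^bsub>H2 Q TQ q\<^esub> inv\<^bsub>H2 Q TQ q\<^esub> cup_quot y
      \<otimes>\<^bsub>H2 Q TQ q\<^esub> inv\<^bsub>H2 Q TQ q\<^esub> cup_quot w"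
    by (simp only: cup_formal_quot_add[OF dx neg[OF dy]] cup_formal_quot_neg[OF dy]
        cup_formal_quot_neg[OF dw] cup_formal_quot_delta[OF x] cup_formal_quot_delta[OF y]
        cup_formal_quot_delta[OF w])
  also have "\<dots> = (cup_quot y \<otimes>\<^bsub>H2 Q TQ q\<^esub> cup_quot w)
      \<otimes>\<^bsub>H2 Q TQ q\<^esub> inv\<^bsub>H2 Q TQ q\<^esub> (cup_quot y \<otimes>\<^bsub>H2 Q TQ q\<^esub> cup_quot w)"
    using cy cw by (simp add: rel H2Q.m_assoc H2Q.inv_mult)
  also have "\<dots> = \<one>\<^bsub>H2 Q TQ q\<^esub>"
    using cy cw by simp
  finally show ?thesis .
qed

lemma cup_formal_quot_bilin_rel:
  assumes "s \<in> bilin_rels G T q" shows "cup_formal_quot s = \<one>\<^bsub>H2 Q TQ q\<^esub>"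
proof -
  have cup_quot_add1:
    "cup_quot (add1 q \<psi> \<psi>', \<phi>) = cup_quot (\<psi>, \<phi>) \<otimes>\<^bsub>H2 Q TQ q\<^esub> cup_quot (\<psi>', \<phi>)"
    "cup_quot (\<phi>, add1 q \<psi> \<psi>') = cup_quot (\<phi>, \<psi>) \<otimes>\<^bsub>H2 Q TQ q\<^esub> cup_quot (\<phi>, \<psi>')"
    if "\<psi> \<in> H1 G T q" "\<psi>' \<in> H1 G T q" "\<phi> \<in> H1 G T q" for \<psi> \<psi>' \<phi>
    using that
    by (simp_all add: cup_quot_def factor1_add1 factor1_in_H1
        cup_add1_left[OF q_pos group_Gquot2 topspace_Tquot2]
        cup_add1_right[OF q_pos group_Gquot2 topspace_Tquot2])
  from assms consider
      (left) \<psi> \<psi>' \<phi> where "\<psi> \<in> H1 G T q" "\<psi>' \<in> H1 G T q" "\<phi> \<in> H1 G T q"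
        "s = (\<lambda>z. delta (add1 q \<psi> \<psi>', \<phi>) z - delta (\<psi>, \<phi>) z - delta (\<psi>', \<phi>) z)"
    | (right) \<psi> \<psi>' \<phi> where "\<psi> \<in> H1 G T q" "\<psi>' \<in> H1 G T q" "\<phi> \<in> H1 G T q"
        "s = (\<lambda>z. delta (\<phi>, add1 q \<psi> \<psi>') z - delta (\<phi>, \<psi>) z - delta (\<phi>, \<psi>') z)"
    unfolding bilin_rels_def by blast
  then show ?thesis
  proof cases
    case left
    then show ?thesis by (simp add: cup_formal_quot_relation cup_quot_add1 H1_add1[OF q_pos])
  next
    case right
    then show ?thesis by (simp add: cup_formal_quot_relation cup_quot_add1 H1_add1[OF q_pos])
  qed
qed

lemma finsupp_on_zspan_relations:
  "F \<in> zspan (bilin_rels G T q \<union> C2_gens G T q) \<Longrightarrow> finsupp_on (H1 G T q \<times> H1 G T q) F"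
proof (erule finsupp_on_zspan)
  fix s assume "s \<in> bilin_rels G T q \<union> C2_gens G T q"
  then show "finsupp_on (H1 G T q \<times> H1 G T q) s"
    unfolding bilin_rels_def C2_gens_def
    by (auto intro!: finsupp_on_delta_relation finsupp_on_delta H1_add1[OF q_pos])
qed

lemma cup_formal_quot_relations:
  assumes "F \<in> zspan (bilin_rels G T q \<union> C2_gens G T q)"
  shows "cup_formal_quot F \<in> generate (H2 Q TQ q) inflated_trivial_cups"
  using assms
proof (induction rule: zspan.induct)
  case zero
  show ?case by (simp add: cup_formal_quot_def lincomb_def generate.one)
next
  case (gen s)
  show ?case
  proof (cases "s \<in> C2_gens G T q")
    case True
    then obtain \<psi> \<psi>' where \<psi>: "\<psi> \<in> H1 G T q" "\<psi>' \<in> H1 G T q"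
      and trivial: "cup G T q \<psi> \<psi>' = \<one>\<^bsub>H2 G T q\<^esub>" and s: "s = delta (\<psi>, \<psi>')"
      unfolding C2_gens_def by blast
    let ?c = "cup Q TQ q (factor1 G T q \<psi>) (factor1 G T q \<psi>')"
    have "infl2 G T q ?c = \<one>\<^bsub>H2 G T q\<^esub>"
      using \<psi> trivial by (simp add: infl2_cup factor1_in_H1 infl1_factor1)
    then have "?c \<in> inflated_trivial_cups"
      by (intro CollectI bexI[OF _ factor1_in_H1[OF \<psi>(1)]] bexI[OF _ factor1_in_H1[OF \<psi>(2)]]) simp
    moreover have "cup_formal_quot s = ?c"
      using \<psi> by (simp add: s cup_formal_quot_delta cup_quot_def)
    ultimately have "cup_formal_quot s \<in> inflated_trivial_cups" by simp
    then show ?thesis by (rule generate.incl)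
  next
    case False
    with gen have "cup_formal_quot s = \<one>\<^bsub>H2 Q TQ q\<^esub>" by (simp add: cup_formal_quot_bilin_rel)
    then show ?thesis by (simp add: generate.one)
  qed
next
  case (neg F)
  have "inflated_trivial_cups \<subseteq> carrier (H2 Q TQ q)"
    using cup_in_H2[OF q_pos group_Gquot2 topspace_Tquot2] by blast
  from H2Q.generate_m_inv_closed[OF this neg.IH]
  show ?case by (simp add: cup_formal_quot_neg[OF finsupp_on_zspan_relations[OF neg.hyps]])
next
  case (add F F')
  from generate.eng[OF add.IH]
  show ?case by (simp add: cup_formal_quot_add finsupp_on_zspan_relations add.hyps)
qed

lemma kernel_infl2_H2dec:
  assumes two_quadratic: "two_quadratic G T q"
  shows "kernel (H2dec Q TQ q) (H2 G T q) (infl2 G T q) = generate (H2 Q TQ q) inflated_trivial_cups"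
proof
  have kernel: "kernel (H2dec Q TQ q) (H2 G T q) (infl2 G T q)
      = {x \<in> generate (H2 Q TQ q) cups_Gquot2. infl2 G T q x = \<one>\<^bsub>H2 G T q\<^esub>}"
    by (simp add: kernel_def H2dec_def)
  show "kernel (H2dec Q TQ q) (H2 G T q) (infl2 G T q) \<subseteq> generate (H2 Q TQ q) inflated_trivial_cups"
  proof
    fix x assume "x \<in> kernel (H2dec Q TQ q) (H2 G T q) (infl2 G T q)"
    then have x: "x \<in> generate (H2 Q TQ q) cups_Gquot2" "infl2 G T q x = \<one>\<^bsub>H2 G T q\<^esub>"
      by (auto simp: kernel)
    then obtain F where F: "finsupp_on (H1 G T q \<times> H1 G T q) F" and x_eq: "cup_formal_quot F = x"
      using H2dec_Gquot2_cup_formal_quot by blast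
    then have "cup_formal G T q F = \<one>\<^bsub>H2 G T q\<^esub>" using x(2) infl2_cup_formal_quot[OF F] by simp
    with F two_quadratic have "F \<in> zspan (bilin_rels G T q \<union> C2_gens G T q)"
      by (simp add: two_quadratic_def finsupp_on_def)
    with x_eq show "x \<in> generate (H2 Q TQ q) inflated_trivial_cups"
      using cup_formal_quot_relations by blast
  qed
  interpret infl: group_hom "H2 Q TQ q" "H2 G T q" "infl2 G T q"
    by (simp add: group_hom_def group_hom_axioms_def infl2_hom H2Q.is_group H2G.is_group)
  have "generate (H2 Q TQ q) inflated_trivial_cups \<subseteq> generate (H2 Q TQ q) cups_Gquot2"
    by (rule H2Q.mono_generate) blast
  moreover have "generate (H2 Q TQ q) inflated_trivial_cups \<subseteq> kernel (H2 Q TQ q) (H2 G T q) (infl2 G T q)"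
    by (rule H2Q.generate_subgroup_incl[OF _ infl.subgroup_kernel])
       (use cup_in_H2[OF q_pos group_Gquot2 topspace_Tquot2] in \<open>auto simp: kernel_def\<close>)
  ultimately show "generate (H2 Q TQ q) inflated_trivial_cups \<subseteq> kernel (H2dec Q TQ q) (H2 G T q) (infl2 G T q)"
    unfolding kernel by (auto simp: kernel_def)
qed

end

theorem lemma2p2:
  fixes G :: "('a, 'b) monoid_scheme" and T :: "'a topology" and p s q :: nat
  assumes "prime p" and "s \<ge> 1" and "q = p ^ s"
    and "profinite_group G T"
    and "two_quadratic G T q"
  shows "kernel (H2dec (Gquot2 G T q) (Tquot2 G T q) q) (H2 G T q) (infl2 G T q)
       = generate (H2 (Gquot2 G T q) (Tquot2 G T q) q)
           {c. \<exists>\<psi>\<in>H1 (Gquot2 G T q) (Tquot2 G T q) q. \<exists>\<psi>'\<in>H1 (Gquot2 G T q) (Tquot2 G T q) q.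
                 c = cup (Gquot2 G T q) (Tquot2 G T q) q \<psi> \<psi>'
               \<and> infl2 G T q c = \<one>\<^bsub>H2 G T q\<^esub>}"
proof -
  have "q > 0" using assms(1,3) prime_gt_0_nat by simp
  moreover have "topological_group G T" using assms(4) by (simp add: profinite_group_def)
  ultimately interpret Zq_topological_group G T q by unfold_locales
  show ?thesis using kernel_infl2_H2dec[OF assms(5)] .
qed

end
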